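(* Let $F$ be any field, $N\in\mathbb{N}$, and $p,p'\in\mathbb{N}$ with $p+p'\le N+1$. If $x\in F^{N+1}$ satisfies $\operatorname{rank}(H_{p-1,p'}(x))\le p'$, then $\operatorname{rank}(H_{p-1,p'}(x))\le \operatorname{rank}(H_{p,p'-1}(x))$.
   Context: $\mathbb{N}=\{0,1,2,\ldots\}$. For $N\in\mathbb{N}$, $x=(x_0,\ldots,x_N)\in F^{N+1}$ and integers $s,t\ge -1$ with $s+t\le N$, the Hankel matrix $H_{s,t}(x)$ is the $(s+1)\times(t+1)$ matrix $(x_{i+j})_{0\le i\le s,\,0\le j\le t}$ (a matrix with zero rows or columns has rank $0$). *)

theory Defs
  imports "Jordan_Normal_Form.DL_Rank"
begin

text \<open>Hankel matrix H_{s,t}(x) with s+1 rows and t+1 columns, given by the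
  numbers of rows r = s+1 and columns c = t+1 (so s,t \<ge> -1 correspond to r,c \<ge> 0).\<close>
definition hankel :: "nat \<Rightarrow> nat \<Rightarrow> 'a vec \<Rightarrow> 'a mat" where
  "hankel r c x = mat r c (\<lambda>(i, j). x $ (i + j))"

definition mrank :: "'a::field mat \<Rightarrow> nat" where
  "mrank A = vec_space.rank (dim_row A) A"

end

theory Submission
  imports Defs "Jordan_Normal_Form.Matrix_Kernel"
begin

(* Write H = H_{p-1,p'} and H' = H_{p,p'-1}. By rank-nullity it suffices to show
   dim ker H > dim ker H' whenever K = ker H' is nonzero; if K = 0, then rank H' = p'
   and the hypothesis already gives the claim. Since the rows of H are windows of the rows
   of H', every c in K yields the two kernel vectors (c,0) and (0,c) of H. Taking a in K
   whose last nonzero entry lies as far right as possible, (0,a) is not of the form (c,0)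
   with c in K, so K + span{(0,a)} is a subspace of ker H of dimension dim K + 1. *)

lemma (in linear_map) inj_on_imp_dim_le:
  assumes inj: "inj_on T (carrier V)" and fV: "V.fin_dim" and fW: "W.fin_dim"
  shows "V.dim \<le> W.dim"
proof -
  obtain B where fB: "finite B" and bB: "V.basis B" using V.finite_basis_exists[OF fV] by blast
  have BV: "B \<subseteq> carrier V" and liB: "V.module.lin_indpt B" using bB unfolding V.basis_def by auto
  have TB: "T ` B \<subseteq> carrier W" using BV by auto
  have li: "W.module.lin_indpt (T ` B)"
  proof (rule W.module.finite_lin_indpt2)
    show "finite (T ` B)" using fB by simp
    show "T ` B \<subseteq> carrier W" by fact
    fix a assume a: "a \<in> T ` B \<rightarrow> carrier K" and lc: "W.module.lincomb a (T ` B) = \<zero>\<^bsub>W\<^esub>"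
    have "W.module.lincomb a (T ` B) = T (V.module.lincomb (a \<circ> T) B)"
      by (rule lincomb_linear_image[OF inj BV a fB])
    moreover have "V.module.lincomb (a \<circ> T) B \<in> carrier V"
      using BV a by (intro V.module.lincomb_closed) auto
    ultimately have "V.module.lincomb (a \<circ> T) B = \<zero>\<^bsub>V\<^esub>"
      using lc inj by (metis V.module.M.zero_closed f0_is_0 inj_on_def)
    moreover have "(a \<circ> T) \<in> B \<rightarrow> carrier K" using a by auto
    ultimately have "(a \<circ> T) \<in> B \<rightarrow> {\<zero>\<^bsub>K\<^esub>}"
      using V.not_lindepD[OF liB fB order_refl] by blast
    then show "\<forall>v\<in>T ` B. a v = \<zero>\<^bsub>K\<^esub>" by auto
  qed
  have "card (T ` B) = card B" using inj BV by (meson card_image inj_on_subset)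
  moreover have "V.dim = card B" using V.dim_basis[OF fB bB] .
  moreover have "card (T ` B) \<le> W.dim" using W.li_le_dim(2)[OF fW TB li] .
  ultimately show ?thesis by simp
qed

lemma mrank_add_kernel_dim:
  fixes A :: "'a::field mat"
  assumes A: "A \<in> carrier_mat nr nc"
  shows "mrank A + kernel.dim nc A = nc"
proof -
  interpret NC: vec_space "TYPE('a)" nc .
  interpret NR: vec_space "TYPE('a)" nr .
  interpret LM: linear_map class_ring NC.V NR.V "\<lambda>v. A *\<^sub>v v"
  proof (unfold_locales)
    show "(\<lambda>v. A *\<^sub>v v) \<in> LinearCombinations.module_hom class_ring NC.V NR.V"
      using A by (auto simp: LinearCombinations.module_hom_def mult_add_distrib_mat_vec mult_mat_vec)
  qed
  have im: "LM.imT = NR.span (set (cols A))"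
    using NR.col_space_eq[OF A] A unfolding LM.im_def NR.col_space_def by auto
  have ker: "LM.kerT = mat_kernel A"
    using A unfolding LM.ker_def mat_kernel_def by auto
  have "vectorspace.dim class_ring (NR.vs LM.imT) + vectorspace.dim class_ring (NC.vs LM.kerT) = NC.dim"
    by (rule LM.rank_nullity) simp
  moreover have "mrank A = vectorspace.dim class_ring (NR.vs LM.imT)"
    using A unfolding mrank_def im by (simp add: NR.rank_def)
  moreover have "kernel.dim nc A = vectorspace.dim class_ring (NC.vs LM.kerT)"
    unfolding ker by simp
  ultimately show ?thesis using NC.dim_is_n by simp
qed

lemma mrank_eq_if_set_cols_eq:
  fixes A B :: "'a::field mat"
  assumes "dim_row A = dim_row B" and "set (cols A) = set (cols B)"
  shows "mrank A = mrank B"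
  using assms unfolding mrank_def by (simp add: vec_space.rank_def)

lemma mat_kernel_add:
  assumes A: "A \<in> carrier_mat nr nc" and "v \<in> mat_kernel A" and "w \<in> mat_kernel A"
  shows "v + w \<in> mat_kernel A"
  using mat_kernelD[OF A \<open>v \<in> mat_kernel A\<close>] mat_kernelD[OF A \<open>w \<in> mat_kernel A\<close>] A
  by (intro mat_kernelI[OF A]) (auto simp: mult_add_distrib_mat_vec)

lemma mat_kernel_fin_dim:
  fixes A :: "'a::field mat"
  assumes A: "A \<in> carrier_mat nr nc"
  shows "vectorspace.fin_dim class_ring ((module_vec TYPE('a) nc)\<lparr>carrier := mat_kernel A\<rparr>)"
proof -
  interpret KA: kernel nr nc A by unfold_locales (rule A)
  obtain Bs where "finite Bs" "KA.basis Bs" using kernel_basis_exists[OF A] by blast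
  then show ?thesis unfolding KA.Ker.fin_dim_def KA.Ker.basis_def by auto
qed

lemma kernel_dim_le_if_inj_on_mat_kernel:
  fixes A B :: "'a::field mat" and f :: "'a vec \<Rightarrow> 'a vec"
  assumes A: "A \<in> carrier_mat nr nc" and B: "B \<in> carrier_mat mr mc"
    and maps: "\<And>v. v \<in> mat_kernel A \<Longrightarrow> f v \<in> mat_kernel B"
    and add: "\<And>v w. v \<in> mat_kernel A \<Longrightarrow> w \<in> mat_kernel A \<Longrightarrow> f (v + w) = f v + f w"
    and smult: "\<And>c v. v \<in> mat_kernel A \<Longrightarrow> f (c \<cdot>\<^sub>v v) = c \<cdot>\<^sub>v f v"
    and inj: "\<And>v. v \<in> mat_kernel A \<Longrightarrow> f v = 0\<^sub>v mc \<Longrightarrow> v = 0\<^sub>v nc"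
  shows "kernel.dim nc A \<le> kernel.dim mc B"
proof -
  interpret KA: kernel nr nc A by unfold_locales (rule A)
  interpret KB: kernel mr mc B by unfold_locales (rule B)
  interpret LM: linear_map class_ring KA.VK KB.VK f
  proof (unfold_locales)
    show "f \<in> LinearCombinations.module_hom class_ring KA.VK KB.VK"
      using maps add smult by (auto simp: LinearCombinations.module_hom_def)
  qed
  have "inj_on f (carrier KA.VK)"
  proof (rule LM.Ke0_imp_inj)
    show "carrier (KA.Ker.vs LM.kerT) = {\<zero>\<^bsub>KA.VK\<^esub>}"
      using inj KA.Ker.zero_closed LM.f0_is_0 unfolding LM.ker_def by auto
  qed
  from LM.inj_on_imp_dim_le[OF this mat_kernel_fin_dim[OF A] mat_kernel_fin_dim[OF B]]
  show ?thesis by simp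
qed

lemma mat_kernel_vec_maximal_support:
  fixes A :: "'a::field mat"
  assumes A: "A \<in> carrier_mat nr nc" and dim: "kernel.dim nc A \<noteq> 0"
  obtains a k where "a \<in> mat_kernel A" "k < nc" "a $ k \<noteq> 0"
    "\<And>c j. c \<in> mat_kernel A \<Longrightarrow> k < j \<Longrightarrow> j < nc \<Longrightarrow> c $ j = 0"
proof -
  interpret KA: kernel nr nc A by unfold_locales (rule A)
  obtain Bs where fB: "finite Bs" and bB: "KA.basis Bs" using kernel_basis_exists[OF A] by blast
  from dim obtain b where b: "b \<in> Bs"
    using KA.Ker.dim_basis[OF fB bB] by fastforce
  have b_ker: "b \<in> mat_kernel A" using bB b unfolding KA.Ker.basis_def by auto
  have "(UNIV :: 'a set) \<noteq> {0}" by (auto simp: set_eq_iff intro!: exI[of _ 1])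
  then have "b \<noteq> 0\<^sub>v nc"
    using KA.Ker.zero_nin_lin_indpt[of Bs] bB b unfolding KA.Ker.basis_def by auto
  moreover have "b \<in> carrier_vec nc" using mat_kernelD(1)[OF A b_ker] .
  ultimately obtain j0 where "j0 < nc" "b $ j0 \<noteq> 0" by (metis eq_vecI carrier_vecD index_zero_vec)
  define S where "S = {j. j < nc \<and> (\<exists>c\<in>mat_kernel A. c $ j \<noteq> 0)}"
  have "j0 \<in> S" using \<open>j0 < nc\<close> \<open>b $ j0 \<noteq> 0\<close> b_ker unfolding S_def by blast
  have fS: "finite S" unfolding S_def by auto
  have "Max S \<in> S" using Max_in[OF fS] \<open>j0 \<in> S\<close> by blast
  moreover have "c $ j = 0" if "c \<in> mat_kernel A" "Max S < j" "j < nc" for c j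
  proof (rule ccontr)
    assume "c $ j \<noteq> 0"
    then have "j \<in> S" using that unfolding S_def by blast
    then show False using Max_ge[OF fS] \<open>Max S < j\<close> by fastforce
  qed
  ultimately show ?thesis using that unfolding S_def by blast
qed

lemma index_mult_mat_vec_sum:
  assumes "i < dim_row A" and "dim_vec v = dim_col A"
  shows "(A *\<^sub>v v) $ i = (\<Sum>j<dim_col A. A $$ (i, j) * v $ j)"
  using assms by (simp add: scalar_prod_def atLeast0LessThan)

definition append_first_col :: "'a mat \<Rightarrow> 'a mat" where
  "append_first_col A = mat (dim_row A) (dim_col A + 1) (\<lambda>(i, j). A $$ (i, if j < dim_col A then j else 0))"

lemma append_first_col_carrier_mat:
  "A \<in> carrier_mat nr nc \<Longrightarrow> append_first_col A \<in> carrier_mat nr (nc + 1)"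
  unfolding append_first_col_def by auto

lemma set_cols_append_first_col:
  assumes "0 < dim_col A"
  shows "set (cols (append_first_col A)) = set (cols A)"
proof -
  let ?n = "dim_col A"
  have "col (append_first_col A) j = col A (if j < ?n then j else 0)" if "j < ?n + 1" for j
    using that assms unfolding append_first_col_def by (intro eq_vecI) auto
  then have "col (append_first_col A) ` {0..<?n + 1}
      = col A ` ((\<lambda>j. if j < ?n then j else 0) ` {0..<?n + 1})"
    by (auto simp: image_image)
  also have "(\<lambda>j. if j < ?n then j else 0) ` {0..<?n + 1} = {0..<?n}"
    using assms by (force simp: image_iff)
  finally have "col (append_first_col A) ` {0..<?n + 1} = col A ` {0..<?n}" .
  moreover have "dim_col (append_first_col A) = ?n + 1" by (simp add: append_first_col_def)
  ultimately show ?thesis by (simp only: cols_def set_map set_upt)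
qed

lemma mult_append_first_col:
  fixes A :: "'a::comm_ring_1 mat"
  assumes A: "A \<in> carrier_mat nr nc" and "0 < nc" and v: "v \<in> carrier_vec (nc + 1)"
  shows "append_first_col A *\<^sub>v v = A *\<^sub>v (vec_first v nc + v $ nc \<cdot>\<^sub>v unit_vec nc 0)"
proof (rule eq_vecI)
  fix i assume "i < dim_vec (A *\<^sub>v (vec_first v nc + v $ nc \<cdot>\<^sub>v unit_vec nc 0))"
  then have i: "i < nr" using A by simp
  have "(append_first_col A *\<^sub>v v) $ i = (\<Sum>j<nc + 1. A $$ (i, if j < nc then j else 0) * v $ j)"
    using A v i by (subst index_mult_mat_vec_sum) (auto simp: append_first_col_def)
  also have "\<dots> = (\<Sum>j<nc. A $$ (i, j) * v $ j) + A $$ (i, 0) * v $ nc"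
    by simp
  also have "\<dots> = (\<Sum>j<nc. A $$ (i, j) * v $ j) + (\<Sum>j<nc. if j = 0 then A $$ (i, j) * v $ nc else 0)"
    using \<open>0 < nc\<close> by simp
  also have "\<dots> = (\<Sum>j<nc. A $$ (i, j) * (v $ j + (if j = 0 then v $ nc else 0)))"
    by (subst sum.distrib[symmetric]) (rule sum.cong; simp add: distrib_left)
  also have "\<dots> = (A *\<^sub>v (vec_first v nc + v $ nc \<cdot>\<^sub>v unit_vec nc 0)) $ i"
    using A i by (subst index_mult_mat_vec_sum) (auto simp: vec_first_def intro!: sum.cong)
  finally show "(append_first_col A *\<^sub>v v) $ i
      = (A *\<^sub>v (vec_first v nc + v $ nc \<cdot>\<^sub>v unit_vec nc 0)) $ i" .
qed (use A in \<open>simp add: append_first_col_def\<close>)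

lemma fold_mem_mat_kernel_append_first_col:
  fixes A :: "'a::comm_ring_1 mat"
  assumes A: "A \<in> carrier_mat nr nc" and "0 < nc" and v: "v \<in> mat_kernel (append_first_col A)"
  shows "vec_first v nc + v $ nc \<cdot>\<^sub>v unit_vec nc 0 \<in> mat_kernel A"
  using mat_kernelD[OF append_first_col_carrier_mat[OF A] v] mult_append_first_col[OF A \<open>0 < nc\<close>]
  by (intro mat_kernelI[OF A]) auto

lemma kernel_dim_append_first_col:
  fixes A :: "'a::field mat"
  assumes A: "A \<in> carrier_mat nr nc" and "0 < nc"
  shows "kernel.dim (nc + 1) (append_first_col A) = kernel.dim nc A + 1"
proof -
  have "mrank (append_first_col A) = mrank A"
    using A \<open>0 < nc\<close> set_cols_append_first_col[of A]
    by (intro mrank_eq_if_set_cols_eq) (auto simp: append_first_col_def)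
  then show ?thesis
    using mrank_add_kernel_dim[OF A] mrank_add_kernel_dim[OF append_first_col_carrier_mat[OF A]]
    by simp
qed

lemma hankel_carrier_mat [simp]: "hankel r c x \<in> carrier_mat r c"
  unfolding hankel_def by simp

lemma index_mult_hankel:
  assumes "i < r" and "dim_vec v = c"
  shows "(hankel r c x *\<^sub>v v) $ i = (\<Sum>j<c. x $ (i + j) * v $ j)"
  using assms by (subst index_mult_mat_vec_sum) (auto simp: hankel_def)

lemma append_zero_mem_mat_kernel_hankel:
  fixes x :: "'a::comm_ring_1 vec"
  assumes v: "v \<in> mat_kernel (hankel (r + 1) c x)"
  shows "v @\<^sub>v 0\<^sub>v 1 \<in> mat_kernel (hankel r (c + 1) x)"
proof (rule mat_kernelI[OF hankel_carrier_mat])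
  have vc: "v \<in> carrier_vec c" and Hv: "hankel (r + 1) c x *\<^sub>v v = 0\<^sub>v (r + 1)"
    using mat_kernelD[OF hankel_carrier_mat v] by auto
  show "v @\<^sub>v 0\<^sub>v 1 \<in> carrier_vec (c + 1)" using append_carrier_vec[OF vc zero_carrier_vec] .
  show "hankel r (c + 1) x *\<^sub>v (v @\<^sub>v 0\<^sub>v 1) = 0\<^sub>v r"
  proof (rule eq_vecI)
    fix i assume "i < dim_vec (0\<^sub>v r :: 'a vec)"
    then have i: "i < r" by simp
    have "(hankel r (c + 1) x *\<^sub>v (v @\<^sub>v 0\<^sub>v 1)) $ i = (\<Sum>j<c. x $ (i + j) * v $ j)"
      using i vc by (simp add: index_mult_hankel)
    also have "\<dots> = (hankel (r + 1) c x *\<^sub>v v) $ i"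
      using i vc by (simp add: index_mult_hankel)
    finally show "(hankel r (c + 1) x *\<^sub>v (v @\<^sub>v 0\<^sub>v 1)) $ i = 0\<^sub>v r $ i"
      using Hv i by simp
  qed (simp add: hankel_def)
qed

lemma zero_append_mem_mat_kernel_hankel:
  fixes x :: "'a::comm_ring_1 vec"
  assumes v: "v \<in> mat_kernel (hankel (r + 1) c x)"
  shows "0\<^sub>v 1 @\<^sub>v v \<in> mat_kernel (hankel r (c + 1) x)"
proof (rule mat_kernelI[OF hankel_carrier_mat])
  have vc: "v \<in> carrier_vec c" and Hv: "hankel (r + 1) c x *\<^sub>v v = 0\<^sub>v (r + 1)"
    using mat_kernelD[OF hankel_carrier_mat v] by auto
  show "0\<^sub>v 1 @\<^sub>v v \<in> carrier_vec (c + 1)"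
    using append_carrier_vec[OF zero_carrier_vec vc] by (simp only: add.commute)
  show "hankel r (c + 1) x *\<^sub>v (0\<^sub>v 1 @\<^sub>v v) = 0\<^sub>v r"
  proof (rule eq_vecI)
    fix i assume "i < dim_vec (0\<^sub>v r :: 'a vec)"
    then have i: "i < r" by simp
    have "(hankel r (c + 1) x *\<^sub>v (0\<^sub>v 1 @\<^sub>v v)) $ i
        = (\<Sum>j<c + 1. x $ (i + j) * (0\<^sub>v 1 @\<^sub>v v) $ j)"
      using i vc by (simp add: index_mult_hankel)
    also have "\<dots> = (\<Sum>j<c. x $ (i + 1 + j) * v $ j)"
      using vc by (simp only: Suc_eq_plus1[symmetric] sum.lessThan_Suc_shift) simp
    also have "\<dots> = (hankel (r + 1) c x *\<^sub>v v) $ (i + 1)"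
      using i vc by (simp add: index_mult_hankel)
    finally show "(hankel r (c + 1) x *\<^sub>v (0\<^sub>v 1 @\<^sub>v v)) $ i = 0\<^sub>v r $ i"
      using Hv i by simp
  qed (simp add: hankel_def)
qed

lemma append_zero_add_smult_zero_append_eq_zeroD:
  fixes w a :: "'a::idom vec"
  assumes w: "w \<in> carrier_vec c" and a: "a \<in> carrier_vec c" and "k < c" "a $ k \<noteq> 0"
    and w_support: "\<And>j. k < j \<Longrightarrow> j < c \<Longrightarrow> w $ j = 0"
    and eq: "(w @\<^sub>v 0\<^sub>v 1) + t \<cdot>\<^sub>v (0\<^sub>v 1 @\<^sub>v a) = 0\<^sub>v (c + 1)"
  shows "t = 0 \<and> w = 0\<^sub>v c"
proof -
  have entry: "(if i < c then w $ i else 0) + t * (if i = 0 then 0 else a $ (i - 1)) = 0"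
    if "i < c + 1" for i
  proof -
    have "((w @\<^sub>v 0\<^sub>v 1) + t \<cdot>\<^sub>v (0\<^sub>v 1 @\<^sub>v a)) $ i = 0" unfolding eq using that by simp
    with that carrier_vecD[OF w] carrier_vecD[OF a] show ?thesis by (simp split: if_split_asm)
  qed
  have "(if k + 1 < c then w $ (k + 1) else 0) = 0" using w_support by simp
  then have "t * a $ k = 0" using entry[of "k + 1"] \<open>k < c\<close> by simp
  then have "t = 0" using \<open>a $ k \<noteq> 0\<close> by simp
  moreover have "w $ i = 0" if "i < c" for i using entry[of i] that \<open>t = 0\<close> by simp
  ultimately show ?thesis using w by auto
qed

lemma kernel_dim_hankel_less:
  fixes x :: "'a::field vec"
  assumes "kernel.dim c (hankel (r + 1) c x) \<noteq> 0"
  shows "kernel.dim c (hankel (r + 1) c x) < kernel.dim (c + 1) (hankel r (c + 1) x)"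
proof -
  let ?H' = "hankel (r + 1) c x" and ?H = "hankel r (c + 1) x"
  \<comment> \<open>ker ?G is isomorphic to ker ?H' \<times> F via v \<mapsto> (?fold v, v $ c)\<close>
  let ?G = "append_first_col ?H'"
  let ?fold = "\<lambda>v. vec_first v c + v $ c \<cdot>\<^sub>v unit_vec c 0"
  obtain a k where a: "a \<in> mat_kernel ?H'" and k: "k < c" "a $ k \<noteq> 0"
    and beyond_k: "\<And>w j. w \<in> mat_kernel ?H' \<Longrightarrow> k < j \<Longrightarrow> j < c \<Longrightarrow> w $ j = 0"
    using mat_kernel_vec_maximal_support[OF hankel_carrier_mat assms] by blast
  have "0 < c" using k by simp
  have G: "?G \<in> carrier_mat (r + 1) (c + 1)" by (rule append_first_col_carrier_mat) simp
  have G_carrier: "v \<in> carrier_vec (c + 1)" if "v \<in> mat_kernel ?G" for v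
    using mat_kernelD(1)[OF G that] .
  have a_carrier: "a \<in> carrier_vec c" using mat_kernelD(1)[OF hankel_carrier_mat a] .
  define f where "f v = (?fold v @\<^sub>v 0\<^sub>v 1) + v $ c \<cdot>\<^sub>v (0\<^sub>v 1 @\<^sub>v a)" for v
  have "kernel.dim (c + 1) ?G \<le> kernel.dim (c + 1) ?H"
  proof (rule kernel_dim_le_if_inj_on_mat_kernel[OF G hankel_carrier_mat])
    fix v assume v: "v \<in> mat_kernel ?G"
    show "f v \<in> mat_kernel ?H"
      unfolding f_def
      by (intro mat_kernel_add[OF hankel_carrier_mat] mat_kernel_smult[OF hankel_carrier_mat]
          append_zero_mem_mat_kernel_hankel zero_append_mem_mat_kernel_hankel a
          fold_mem_mat_kernel_append_first_col[OF hankel_carrier_mat \<open>0 < c\<close> v])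
    fix w assume w: "w \<in> mat_kernel ?G"
    show "f (v + w) = f v + f w"
      using G_carrier[OF v] G_carrier[OF w] a_carrier
      by (intro eq_vecI) (auto simp: f_def vec_first_def algebra_simps)
  next
    fix t v assume v: "v \<in> mat_kernel ?G"
    show "f (t \<cdot>\<^sub>v v) = t \<cdot>\<^sub>v f v"
      using G_carrier[OF v] a_carrier
      by (intro eq_vecI) (auto simp: f_def vec_first_def algebra_simps)
  next
    fix v assume v: "v \<in> mat_kernel ?G" and fv: "f v = 0\<^sub>v (c + 1)"
    have vc: "v \<in> carrier_vec (c + 1)" using G_carrier[OF v] .
    have "v $ c = 0 \<and> ?fold v = 0\<^sub>v c"
    proof (rule append_zero_add_smult_zero_append_eq_zeroD[OF _ a_carrier k])
      show "?fold v \<in> carrier_vec c" by simp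
      show "?fold v $ j = 0" if "k < j" "j < c" for j
        using beyond_k[OF fold_mem_mat_kernel_append_first_col[OF hankel_carrier_mat \<open>0 < c\<close> v] that] .
    qed (use fv in \<open>simp add: f_def\<close>)
    then have "v $ c = 0" and fold_v: "?fold v = 0\<^sub>v c" by auto
    have "v $ i = 0" if "i < c" for i
      using arg_cong[OF fold_v, of "\<lambda>u. u $ i"] that \<open>v $ c = 0\<close> by (simp add: vec_first_def)
    then show "v = 0\<^sub>v (c + 1)" using vc \<open>v $ c = 0\<close> by (intro eq_vecI) (auto simp: less_Suc_eq)
  qed
  then show ?thesis
    using kernel_dim_append_first_col[OF hankel_carrier_mat[of "r + 1" c x] \<open>0 < c\<close>] by simp
qed

theorem lemma7:
  fixes x :: "'a::field vec" and N p p' :: nat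
  assumes "dim_vec x = N + 1"
    and "p + p' \<le> N + 1"
    and "mrank (hankel p (p' + 1) x) \<le> p'"
  shows "mrank (hankel p (p' + 1) x) \<le> mrank (hankel (p + 1) p' x)"
proof -
  let ?H = "hankel p (p' + 1) x" and ?H' = "hankel (p + 1) p' x"
  have rank_H: "mrank ?H + kernel.dim (p' + 1) ?H = p' + 1"
    by (rule mrank_add_kernel_dim[OF hankel_carrier_mat])
  have rank_H': "mrank ?H' + kernel.dim p' ?H' = p'"
    by (rule mrank_add_kernel_dim[OF hankel_carrier_mat])
  show ?thesis
  proof (cases "kernel.dim p' ?H' = 0")
    case True
    then show ?thesis using rank_H' assms(3) by simp
  next
    case False
    then show ?thesis using kernel_dim_hankel_less[OF False] rank_H rank_H' by linarith
  qed
qed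

end
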